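(* Fix $\epsilon>0$ and an integer $L\geq 2$ with $2\epsilon<1/L$. (1) If $L=2$, then $\log\frac{1}{\epsilon}\leq N^*(\epsilon,1/L,L)\leq \log\frac{1}{\epsilon}+4$. (2) If $L\geq 3$, then $\log\frac{1}{L\epsilon}+2L-4\leq N^*(\epsilon,1/L,L)\leq \log\frac{1}{L\epsilon}+2L$.
   Context: Private sequential learning model. An unknown true value $v^*\in[0,1)$. A learner submits queries $q_k\in[0,1)$ and receives responses $r_k=\mathbb{I}(v^*\geq q_k)$. A learner strategy $\phi$ of length $N$ uses a random seed $Y$ uniformly distributed on $\{1,2,\dots,\mathcal{Y}\}$ and consists of query functions and an estimation function: $q_1=\phi_1(Y)$, $q_k=\phi_k(r_1,\dots,r_{k-1},Y)$, and estimate $\hat x=\phi^E(r_1,\dots,r_N,Y)\in[0,1)$; queries within a run are distinct. $\Phi_N$ is the set of such strategies of length $N$; $\hat x(x,y)$ is the estimate when $v^*=x,Y=y$. $\mathcal{Q}(x)$ is the set of query sequences $\overline q\in[0,1)^N$ having positive probability (over $Y$) when $v^*=x$; the information set is $\mathcal{I}(\overline q)=\{x\in[0,1):\overline q\in\mathcal{Q}(x)\}$. The $\delta$-cover number $C_\delta(\mathcal{E})$ of a set $\mathcal{E}\subset\mathbb{R}$ is the least number of closed intervals of length at most $\delta$ whose union contains $\mathcal{E}$. A strategy is $(\epsilon,\delta,L)$-private if $\mathbb{P}(|\hat x(x,Y)-x|\leq\epsilon/2)=1$ for all $x\in[0,1)$ and $C_\delta(\mathcal{I}(\overline q))\geq L$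 for all $x\in[0,1)$ and all $\overline q\in\mathcal{Q}(x)$. $N^*(\epsilon,\delta,L)$ is the minimal $N$ such that $\Phi_N$ contains an $(\epsilon,\delta,L)$-private strategy. Logarithms are base 2 and non-integer quantities are rounded up to the nearest integer. *)

theory Defs
  imports Complex_Main
begin

text \<open>A learner strategy of length N: seed space {1..Yc} (Y uniform), query function
  qf y rs = next query given seed y and previous responses rs, and estimator
  est y rs = estimate given seed y and all N responses.\<close>

fun resps :: "(nat \<Rightarrow> bool list \<Rightarrow> real) \<Rightarrow> real \<Rightarrow> nat \<Rightarrow> nat \<Rightarrow> bool list" where
  "resps qf x y 0 = []"
| "resps qf x y (Suc k) = (let rs = resps qf x y k in rs @ [x \<ge> qf y rs])"

definition queries :: "(nat \<Rightarrow> bool list \<Rightarrow> real) \<Rightarrow> nat \<Rightarrow> real \<Rightarrow> nat \<Rightarrow> real list" where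
  "queries qf N x y = map (\<lambda>k. qf y (resps qf x y k)) [0..<N]"

definition estimate :: "(nat \<Rightarrow> bool list \<Rightarrow> real) \<Rightarrow> (nat \<Rightarrow> bool list \<Rightarrow> real) \<Rightarrow> nat \<Rightarrow> real \<Rightarrow> nat \<Rightarrow> real" where
  "estimate qf est N x y = est y (resps qf x y N)"

definition is_strategy :: "nat \<Rightarrow> nat \<Rightarrow> (nat \<Rightarrow> bool list \<Rightarrow> real) \<Rightarrow> (nat \<Rightarrow> bool list \<Rightarrow> real) \<Rightarrow> bool" where
  "is_strategy N Yc qf est \<longleftrightarrow>
     Yc \<ge> 1 \<and>
     (\<forall>y\<in>{1..Yc}. \<forall>rs. length rs < N \<longrightarrow> qf y rs \<in> {0..<1}) \<and>
     (\<forall>y\<in>{1..Yc}. \<forall>rs. length rs = N \<longrightarrow> est y rs \<in> {0..<1}) \<and>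
     (\<forall>x\<in>{0..<1}. \<forall>y\<in>{1..Yc}. distinct (queries qf N x y))"

text \<open>Q(x): query sequences with positive probability over uniform Y when v* = x.\<close>
definition Qset :: "nat \<Rightarrow> nat \<Rightarrow> (nat \<Rightarrow> bool list \<Rightarrow> real) \<Rightarrow> real \<Rightarrow> real list set" where
  "Qset N Yc qf x = {queries qf N x y | y. y \<in> {1..Yc}}"

definition info_set :: "nat \<Rightarrow> nat \<Rightarrow> (nat \<Rightarrow> bool list \<Rightarrow> real) \<Rightarrow> real list \<Rightarrow> real set" where
  "info_set N Yc qf qs = {x \<in> {0..<1}. qs \<in> Qset N Yc qf x}"

definition cover_number :: "real \<Rightarrow> real set \<Rightarrow> nat" where
  "cover_number \<delta> E = (LEAST n. \<exists>a b :: nat \<Rightarrow> real.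
       (\<forall>i<n. a i \<le> b i \<and> b i - a i \<le> \<delta>) \<and> E \<subseteq> (\<Union>i<n. {a i..b i}))"

definition is_private :: "real \<Rightarrow> real \<Rightarrow> nat \<Rightarrow> nat \<Rightarrow> nat \<Rightarrow> (nat \<Rightarrow> bool list \<Rightarrow> real) \<Rightarrow> (nat \<Rightarrow> bool list \<Rightarrow> real) \<Rightarrow> bool" where
  "is_private \<epsilon> \<delta> L N Yc qf est \<longleftrightarrow>
     (\<forall>x\<in>{0..<1}. \<forall>y\<in>{1..Yc}. \<bar>estimate qf est N x y - x\<bar> \<le> \<epsilon> / 2) \<and>
     (\<forall>x\<in>{0..<1}. \<forall>qs\<in>Qset N Yc qf x. cover_number \<delta> (info_set N Yc qf qs) \<ge> L)"

definition Nstar :: "real \<Rightarrow> real \<Rightarrow> nat \<Rightarrow> nat" where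
  "Nstar \<epsilon> \<delta> L = (LEAST N. \<exists>Yc qf est. is_strategy N Yc qf est \<and> is_private \<epsilon> \<delta> L N Yc qf est)"

end

(* Lower bound: run seed 1 against an adversary that answers every query splitting the interval
   [lo, hi) of values consistent with its answers so as to keep the longer part.  Accuracy forces
   the final interval to have length at most \<epsilon>, whence 2^N \<epsilon> \<ge> 1.  Let [a, b) be the interval at
   the first time its length is at most \<delta> = 1/L; it is longer than \<delta>/2, so at least
   log (\<delta>/\<epsilon>) - 1 later queries split it and lie in (a, b).  Privacy gives L values more than \<delta>
   apart with this query sequence; by accuracy each lies in a cell of the query partition of length
   at most \<epsilon> < \<delta>/2, so the 2L cell ends are distinct and, since at most one of the values lies
   in [a, b), at least 2L - 3 queries lie outside (a, b).

   Upper bound: 2L - 2 scan queries at j d + \<epsilon> and (j + 1) d, where d = (1 - \<epsilon>)/(L - 1), cut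
   [0, 1) into L - 1 gaps and L slots [i d, i d + \<epsilon>).  A value in a gap is then located by M
   bisection steps.  For a value in a slot the remaining M queries imitate the bisection towards
   a point chosen by the seed, so each of the L decoys i d, which are d > 1/L apart, produces every
   query sequence of the strategy. *)

theory Submission
  imports Defs
begin

lemma length_resps [simp]: "length (resps qf x y k) = k"
  by (induction k) (auto simp: Let_def)

lemma length_queries [simp]: "length (queries qf N x y) = N"
  by (simp add: queries_def)

lemma take_resps: "k \<le> n \<Longrightarrow> take k (resps qf x y n) = resps qf x y k"
proof (induction n)
  case (Suc n)
  then show ?case
    by (cases "k = Suc n") (simp_all add: Let_def)
qed simp

lemma resps_eq_if_same_side:
  assumes "\<forall>s\<in>set (queries qf N x y). (s \<le> x) = (s \<le> x')" and "k \<le> N"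
  shows "resps qf x' y k = resps qf x y k"
  using assms(2)
proof (induction k)
  case (Suc k)
  have "qf y (resps qf x y k) \<in> set (queries qf N x y)"
    using Suc.prems by (auto simp: queries_def)
  then show ?case
    using Suc assms(1) by (simp add: Let_def)
qed simp

lemma estimate_eq_if_same_side:
  "\<forall>s\<in>set (queries qf N x y). (s \<le> x) = (s \<le> x') \<Longrightarrow>
    estimate qf est N x' y = estimate qf est N x y"
  using resps_eq_if_same_side[of qf N x y x' N] by (simp add: estimate_def)

section \<open>Cover numbers\<close>

definition covers :: "real \<Rightarrow> real set \<Rightarrow> nat \<Rightarrow> bool" where
  "covers \<delta> E n \<longleftrightarrow> (\<exists>a b :: nat \<Rightarrow> real.
       (\<forall>i<n. a i \<le> b i \<and> b i - a i \<le> \<delta>) \<and> E \<subseteq> (\<Union>i<n. {a i..b i}))"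

definition separated :: "real \<Rightarrow> nat \<Rightarrow> (nat \<Rightarrow> real) \<Rightarrow> bool" where
  "separated \<delta> L p \<longleftrightarrow> (\<forall>i j. i < j \<longrightarrow> j < L \<longrightarrow> \<delta> < p j - p i)"

lemma cover_number_eq_Least: "cover_number \<delta> E = (LEAST n. covers \<delta> E n)"
  by (simp add: cover_number_def covers_def)

lemma cover_number_le: "covers \<delta> E n \<Longrightarrow> cover_number \<delta> E \<le> n"
  unfolding cover_number_eq_Least by (rule Least_le)

lemma covers_empty: "0 \<le> \<delta> \<Longrightarrow> covers \<delta> {} n"
  unfolding covers_def by (rule exI[of _ "\<lambda>_. 0"], rule exI[of _ "\<lambda>_. 0"]) simp

lemma covers_unit_interval:
  assumes "E \<subseteq> {0..<1}" "L \<ge> 1"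
  shows "covers (1 / real L) E L"
  unfolding covers_def
proof (intro exI conjI allI impI)
  fix i assume "i < L"
  show "real i / real L \<le> (real i + 1) / real L"
    by (simp add: divide_right_mono)
  show "(real i + 1) / real L - real i / real L \<le> 1 / real L"
    by (simp add: diff_divide_distrib[symmetric])
next
  show "E \<subseteq> (\<Union>i<L. {real i / real L..(real i + 1) / real L})"
  proof
    fix x assume x: "x \<in> E"
    define i where "i = nat \<lfloor>x * real L\<rfloor>"
    have "0 \<le> x" "x < 1"
      using x assms(1) by auto
    then have "i < L" "x \<in> {real i / real L..(real i + 1) / real L}"
      using assms(2) by (auto simp: i_def nat_less_iff floor_less_iff divide_le_eq le_divide_eq)
    then show "x \<in> (\<Union>i<L. {real i / real L..(real i + 1) / real L})"
      by blast
  qed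
qed

lemma cover_number_ge_if_separated:
  assumes "covers \<delta> E n" and p: "\<forall>i<L. p i \<in> E" and sep: "separated \<delta> L p"
  shows "L \<le> cover_number \<delta> E"
proof -
  have "L \<le> k" if "covers \<delta> E k" for k
  proof -
    from that obtain a b where ab: "\<forall>i<k. b i - a i \<le> \<delta>" "E \<subseteq> (\<Union>i<k. {a i..b i})"
      unfolding covers_def by blast
    have "\<forall>i<L. \<exists>l<k. p i \<in> {a l..b l}"
      using p ab(2) by blast
    then obtain f where f: "\<forall>i<L. f i < k \<and> p i \<in> {a (f i)..b (f i)}"
      by metis
    have "inj_on f {..<L}"
    proof (rule inj_onI)
      fix i j assume ij: "i \<in> {..<L}" "j \<in> {..<L}" "f i = f j"
      then have "p i \<in> {a (f i)..b (f i)}" "p j \<in> {a (f i)..b (f i)}" "b (f i) - a (f i) \<le> \<delta>"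
        using f ab(1) by auto
      then have "\<not> \<delta> < p j - p i" "\<not> \<delta> < p i - p j"
        by auto
      with sep ij show "i = j"
        unfolding separated_def by (meson lessThan_iff linorder_neqE_nat)
    qed
    moreover have "f ` {..<L} \<subseteq> {..<k}"
      using f by auto
    ultimately show ?thesis
      using card_inj_on_le[of f "{..<L}" "{..<k}"] by simp
  qed
  then show ?thesis
    using assms(1) unfolding cover_number_eq_Least by (metis LeastI)
qed

lemma covers_Suc_if_covers_above:
  assumes "covers \<delta> (E \<inter> {m + \<delta><..}) n" "\<forall>x\<in>E. m \<le> x" "0 \<le> \<delta>"
  shows "covers \<delta> E (Suc n)"
proof -
  obtain a b where ab: "\<forall>i<n. a i \<le> b i \<and> b i - a i \<le> \<delta>" "E \<inter> {m + \<delta><..} \<subseteq> (\<Union>i<n. {a i..b i})"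
    using assms(1) unfolding covers_def by blast
  have "E \<subseteq> (\<Union>i<Suc n. {(a(n := m)) i..(b(n := m + \<delta>)) i})"
  proof
    fix x assume "x \<in> E"
    then show "x \<in> (\<Union>i<Suc n. {(a(n := m)) i..(b(n := m + \<delta>)) i})"
      using assms(2) ab(2) by (cases "x \<le> m + \<delta>") force+
  qed
  with ab(1) assms(3) show ?thesis
    unfolding covers_def
    by (intro exI[of _ "a(n := m)"] exI[of _ "b(n := m + \<delta>)"]) (auto simp: less_Suc_eq)
qed

lemma separated_shift:
  assumes "separated \<delta> (Suc n) p" "e < p 0 - \<delta>" "0 < \<delta>"
  shows "separated \<delta> (Suc (Suc n)) (\<lambda>i. if i = 0 then e else p (i - 1))"
proof -
  have "p 0 \<le> p i" if "i < Suc n" for i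
    using assms(1,3) that unfolding separated_def by (cases i) force+
  then show ?thesis
    using assms(1,2) unfolding separated_def by (force simp: less_Suc_eq_0_disj)
qed

lemma separated_points_if_not_covers:
  assumes "0 < \<delta>" "bdd_below E" "\<not> covers \<delta> E n"
  shows "\<exists>p. (\<forall>i<Suc n. p i \<in> E) \<and> separated \<delta> (Suc n) p"
  using assms(2,3)
proof (induction n arbitrary: E)
  case 0
  then obtain e where "e \<in> E"
    using covers_empty[of \<delta> 0] assms(1) by fastforce
  then show ?case
    by (intro exI[of _ "\<lambda>_. e"]) (auto simp: separated_def)
next
  case (Suc n)
  have "E \<noteq> {}"
    using Suc.prems(2) covers_empty[of \<delta>] assms(1) by auto
  define m where "m = Inf E"
  define E' where "E' = E \<inter> {m + \<delta><..}"
  have "\<forall>x\<in>E. m \<le> x"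
    using Suc.prems(1) by (simp add: m_def cInf_lower)
  then have "\<not> covers \<delta> E' n"
    using Suc.prems(2) covers_Suc_if_covers_above[of \<delta> E m n] assms(1) by (auto simp: E'_def)
  moreover have "bdd_below E'"
    using Suc.prems(1) unfolding E'_def by (rule bdd_below_Int1)
  ultimately obtain p where p: "\<forall>i<Suc n. p i \<in> E'" "separated \<delta> (Suc n) p"
    using Suc.IH by blast
  have "Inf E < p 0 - \<delta>"
    using p(1) by (auto simp: E'_def m_def)
  then obtain e where e: "e \<in> E" "e < p 0 - \<delta>"
    using \<open>E \<noteq> {}\<close> by (meson cInf_lessD)
  have "\<forall>i<Suc (Suc n). (if i = 0 then e else p (i - 1)) \<in> E"
    using e(1) p(1) by (auto simp: E'_def)
  with separated_shift[OF p(2) e(2) assms(1)] show ?case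
    by (intro exI[of _ "\<lambda>i. if i = 0 then e else p (i - 1)"] conjI)
qed

lemma separated_points_if_cover_number_ge:
  assumes "0 < \<delta>" "E \<subseteq> {0..<1}" "L \<le> cover_number \<delta> E" "1 \<le> L"
  shows "\<exists>p. (\<forall>i<L. p i \<in> E) \<and> separated \<delta> L p"
proof -
  have "\<not> covers \<delta> E (L - 1)"
    using cover_number_le assms(3,4) by fastforce
  moreover have "bdd_below E"
    using assms(2) by (meson atLeastLessThan_iff bdd_below.I subset_iff)
  ultimately show ?thesis
    using separated_points_if_not_covers[OF assms(1)] assms(4) by fastforce
qed

lemma interval_length_le_if_close:
  fixes lo hi e \<epsilon> :: real
  assumes "lo < hi" and close: "\<forall>z\<in>{lo..<hi}. \<bar>e - z\<bar> \<le> \<epsilon> / 2"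
  shows "hi - lo \<le> \<epsilon>"
proof (rule ccontr)
  assume long: "\<not> hi - lo \<le> \<epsilon>"
  have "\<bar>e - lo\<bar> \<le> \<epsilon> / 2"
    using close assms(1) by simp
  then have "0 \<le> \<epsilon>"
    using abs_ge_zero[of "e - lo"] by linarith
  with long have "(lo + \<epsilon> + hi) / 2 \<in> {lo..<hi}"
    by simp
  with close have "\<bar>e - (lo + \<epsilon> + hi) / 2\<bar> \<le> \<epsilon> / 2"
    by blast
  with \<open>\<bar>e - lo\<bar> \<le> \<epsilon> / 2\<close> long show False
    unfolding abs_le_iff by argo
qed

definition accurate ::
    "real \<Rightarrow> nat \<Rightarrow> nat \<Rightarrow> (nat \<Rightarrow> bool list \<Rightarrow> real) \<Rightarrow> (nat \<Rightarrow> bool list \<Rightarrow> real) \<Rightarrow> bool" where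
  "accurate \<epsilon> N Yc qf est \<longleftrightarrow> (\<forall>x\<in>{0..<1}. \<forall>y\<in>{1..Yc}. \<bar>estimate qf est N x y - x\<bar> \<le> \<epsilon> / 2)"

lemma accurate_if_private: "is_private \<epsilon> \<delta> L N Yc qf est \<Longrightarrow> accurate \<epsilon> N Yc qf est"
  by (simp add: is_private_def accurate_def)

lemma accurate_constant_interval_length_le:
  assumes "accurate \<epsilon> N Yc qf est" "y \<in> {1..Yc}" "0 \<le> lo" "lo < hi" "hi \<le> 1"
    and const: "\<forall>z\<in>{lo..<hi}. estimate qf est N z y = c"
  shows "hi - lo \<le> \<epsilon>"
proof (rule interval_length_le_if_close)
  show "\<forall>z\<in>{lo..<hi}. \<bar>c - z\<bar> \<le> \<epsilon> / 2"
    using assms unfolding accurate_def by force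
qed (fact \<open>lo < hi\<close>)

section \<open>The bisection adversary\<close>

(* The state after k queries of seed y: the answers so far and the interval [lo, hi) of the values
   consistent with them. *)
fun adversary :: "(nat \<Rightarrow> bool list \<Rightarrow> real) \<Rightarrow> nat \<Rightarrow> nat \<Rightarrow> bool list \<times> real \<times> real" where
  "adversary qf y 0 = ([], 0, 1)"
| "adversary qf y (Suc k) = (case adversary qf y k of (R, lo, hi) \<Rightarrow>
     (let q = qf y R in
       if lo < q \<and> q < hi then
         (if q - lo \<le> hi - q then (R @ [True], q, hi) else (R @ [False], lo, q))
       else (R @ [q \<le> lo], lo, hi)))"

definition adv_resps :: "(nat \<Rightarrow> bool list \<Rightarrow> real) \<Rightarrow> nat \<Rightarrow> nat \<Rightarrow> bool list" where
  "adv_resps qf y k = fst (adversary qf y k)"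

definition adv_lo :: "(nat \<Rightarrow> bool list \<Rightarrow> real) \<Rightarrow> nat \<Rightarrow> nat \<Rightarrow> real" where
  "adv_lo qf y k = fst (snd (adversary qf y k))"

definition adv_hi :: "(nat \<Rightarrow> bool list \<Rightarrow> real) \<Rightarrow> nat \<Rightarrow> nat \<Rightarrow> real" where
  "adv_hi qf y k = snd (snd (adversary qf y k))"

definition adv_query :: "(nat \<Rightarrow> bool list \<Rightarrow> real) \<Rightarrow> nat \<Rightarrow> nat \<Rightarrow> real" where
  "adv_query qf y k = qf y (adv_resps qf y k)"

definition adv_splits :: "(nat \<Rightarrow> bool list \<Rightarrow> real) \<Rightarrow> nat \<Rightarrow> nat \<Rightarrow> bool" where
  "adv_splits qf y k \<longleftrightarrow> adv_lo qf y k < adv_query qf y k \<and> adv_query qf y k < adv_hi qf y k"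

lemma adversary_0 [simp]: "adv_resps qf y 0 = []" "adv_lo qf y 0 = 0" "adv_hi qf y 0 = 1"
  by (simp_all add: adv_resps_def adv_lo_def adv_hi_def)

lemma adversary_Suc:
  "adv_resps qf y (Suc k) = adv_resps qf y k @
     [if adv_splits qf y k then adv_query qf y k - adv_lo qf y k \<le> adv_hi qf y k - adv_query qf y k
      else adv_query qf y k \<le> adv_lo qf y k]"
  "adv_lo qf y (Suc k) =
     (if adv_splits qf y k \<and> adv_query qf y k - adv_lo qf y k \<le> adv_hi qf y k - adv_query qf y k
      then adv_query qf y k else adv_lo qf y k)"
  "adv_hi qf y (Suc k) =
     (if adv_splits qf y k \<and> \<not> adv_query qf y k - adv_lo qf y k \<le> adv_hi qf y k - adv_query qf y k
      then adv_query qf y k else adv_hi qf y k)"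
  by (auto simp: adv_resps_def adv_lo_def adv_hi_def adv_query_def adv_splits_def Let_def
      split: prod.splits)

lemma adv_interval: "0 \<le> adv_lo qf y k \<and> adv_lo qf y k < adv_hi qf y k \<and> adv_hi qf y k \<le> 1"
  by (induction k) (auto simp: adversary_Suc adv_splits_def)

lemma adv_lo_mono: "k \<le> k' \<Longrightarrow> adv_lo qf y k \<le> adv_lo qf y k'"
proof (induction k' rule: dec_induct)
  case (step n)
  then show ?case
    using adv_interval[of qf y n] by (auto simp: adversary_Suc adv_splits_def)
qed simp

lemma adv_hi_antimono: "k \<le> k' \<Longrightarrow> adv_hi qf y k' \<le> adv_hi qf y k"
proof (induction k' rule: dec_induct)
  case (step n)
  then show ?case
    using adv_interval[of qf y n] by (auto simp: adversary_Suc adv_splits_def)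
qed simp

lemma resps_eq_adv_resps:
  "adv_lo qf y k \<le> x \<Longrightarrow> x < adv_hi qf y k \<Longrightarrow> resps qf x y k = adv_resps qf y k"
proof (induction k)
  case (Suc k)
  then have "adv_lo qf y k \<le> x" "x < adv_hi qf y k" "resps qf x y k = adv_resps qf y k"
    using adv_lo_mono[of k "Suc k" qf y] adv_hi_antimono[of k "Suc k" qf y] by auto
  with Suc.prems show ?case
    by (auto simp: adversary_Suc Let_def adv_query_def[symmetric] adv_splits_def split: if_splits)
qed simp

lemma adv_length_halves:
  "(adv_hi qf y k - adv_lo qf y k) / 2 \<le> adv_hi qf y (Suc k) - adv_lo qf y (Suc k)"
  using adv_interval[of qf y k] by (auto simp: adversary_Suc adv_splits_def)

lemma adv_length_le_pow_splits:
  "k \<le> n \<Longrightarrow> adv_hi qf y k - adv_lo qf y k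
     \<le> 2 ^ card {j\<in>{k..<n}. adv_splits qf y j} * (adv_hi qf y n - adv_lo qf y n)"
proof (induction n rule: dec_induct)
  case (step n)
  let ?S = "\<lambda>n. {j\<in>{k..<n}. adv_splits qf y j}"
  show ?case
  proof (cases "adv_splits qf y n")
    case True
    then have "?S (Suc n) = insert n (?S n)"
      using step(1) by auto
    then have "card (?S (Suc n)) = Suc (card (?S n))"
      by simp
    have "adv_hi qf y k - adv_lo qf y k \<le> 2 ^ card (?S n) * (adv_hi qf y n - adv_lo qf y n)"
      by (fact step(3))
    also have "\<dots> \<le> 2 ^ card (?S n) * (2 * (adv_hi qf y (Suc n) - adv_lo qf y (Suc n)))"
      using adv_length_halves[of qf y n] by (intro mult_left_mono) auto
    finally show ?thesis
      using \<open>card (?S (Suc n)) = Suc (card (?S n))\<close> by (simp add: algebra_simps)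
  next
    case False
    then have "?S (Suc n) = ?S n"
      using step(1) by (auto simp: less_Suc_eq)
    then show ?thesis
      using step(3) False by (simp add: adversary_Suc)
  qed
qed simp

lemma adv_lo_cases: "adv_lo qf y k = 0 \<or> (\<exists>j<k. adv_lo qf y k = adv_query qf y j)"
  by (induction k) (auto simp: adversary_Suc less_Suc_eq)

lemma adv_hi_cases: "adv_hi qf y k = 1 \<or> (\<exists>j<k. adv_hi qf y k = adv_query qf y j)"
  by (induction k) (auto simp: adversary_Suc less_Suc_eq)

lemma queries_adv_lo: "queries qf N (adv_lo qf y N) y = map (adv_query qf y) [0..<N]"
proof -
  have "resps qf (adv_lo qf y N) y k = adv_resps qf y k" if "k < N" for k
    using that adv_lo_mono[of k N qf y] adv_hi_antimono[of k N qf y] adv_interval[of qf y N]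
    by (intro resps_eq_adv_resps) auto
  then show ?thesis
    by (simp add: queries_def adv_query_def)
qed

lemma accurate_adv_length_le:
  assumes "accurate \<epsilon> N Yc qf est" "y \<in> {1..Yc}"
  shows "adv_hi qf y N - adv_lo qf y N \<le> \<epsilon>"
  using adv_interval[of qf y N] resps_eq_adv_resps[of qf y N]
  by (intro accurate_constant_interval_length_le[OF assms, where c = "est y (adv_resps qf y N)"])
    (auto simp: estimate_def)

section \<open>Cells of a query partition\<close>

definition cell_lo :: "real set \<Rightarrow> real \<Rightarrow> real" where
  "cell_lo Q p = Max (insert 0 {s\<in>Q. s \<le> p})"

definition cell_hi :: "real set \<Rightarrow> real \<Rightarrow> real" where
  "cell_hi Q p = Min (insert 1 {s\<in>Q. p < s})"

context
  fixes Q :: "real set"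
  assumes finite_Q: "finite Q"
begin

lemma cell_lo_le: "0 \<le> p \<Longrightarrow> cell_lo Q p \<le> p"
  using finite_Q by (simp add: cell_lo_def)

lemma less_cell_hi: "p < 1 \<Longrightarrow> p < cell_hi Q p"
  using finite_Q by (simp add: cell_hi_def)

lemma cell_lo_nonneg: "0 \<le> cell_lo Q p"
  using finite_Q by (simp add: cell_lo_def)

lemma cell_hi_le_one: "cell_hi Q p \<le> 1"
  using finite_Q by (simp add: cell_hi_def)

lemma cell_lo_cases: "cell_lo Q p = 0 \<or> cell_lo Q p \<in> Q"
  using finite_Q Max_in[of "insert 0 {s\<in>Q. s \<le> p}"] by (auto simp: cell_lo_def)

lemma cell_hi_cases: "cell_hi Q p = 1 \<or> cell_hi Q p \<in> Q"
  using finite_Q Min_in[of "insert 1 {s\<in>Q. p < s}"] by (auto simp: cell_hi_def)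

lemma le_cell_lo: "s \<in> Q \<Longrightarrow> s \<le> p \<Longrightarrow> s \<le> cell_lo Q p"
  using finite_Q by (simp add: cell_lo_def)

lemma cell_hi_le: "s \<in> Q \<Longrightarrow> p < s \<Longrightarrow> cell_hi Q p \<le> s"
  using finite_Q by (simp add: cell_hi_def)

lemma query_outside_cell: "s \<in> Q \<Longrightarrow> s \<le> cell_lo Q p \<or> cell_hi Q p \<le> s"
  using le_cell_lo[of s p] cell_hi_le[of s p] by (cases "s \<le> p") auto

lemma same_side_in_cell:
  "cell_lo Q p \<le> z \<Longrightarrow> z < cell_hi Q p \<Longrightarrow> s \<in> Q \<Longrightarrow> (s \<le> z) = (s \<le> p)"
  using le_cell_lo[of s p] cell_hi_le[of s p] by force

end

lemma accurate_cell_length_le: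
  assumes "accurate \<epsilon> N Yc qf est" "y \<in> {1..Yc}" "p \<in> {0..<1}"
  defines "Q \<equiv> set (queries qf N p y)"
  shows "cell_hi Q p - cell_lo Q p \<le> \<epsilon>"
proof (rule accurate_constant_interval_length_le[OF assms(1,2)])
  have "finite Q"
    by (simp add: Q_def)
  then show "0 \<le> cell_lo Q p" "cell_hi Q p \<le> 1"
    by (simp_all add: cell_lo_nonneg cell_hi_le_one)
  from \<open>finite Q\<close> have "cell_lo Q p \<le> p" "p < cell_hi Q p"
    using assms(3) by (simp_all add: cell_lo_le less_cell_hi)
  then show "cell_lo Q p < cell_hi Q p"
    by linarith
  show "\<forall>z\<in>{cell_lo Q p..<cell_hi Q p}. estimate qf est N z y = estimate qf est N p y"
  proof
    fix z assume "z \<in> {cell_lo Q p..<cell_hi Q p}"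
    with \<open>finite Q\<close> have "\<forall>s\<in>Q. (s \<le> p) = (s \<le> z)"
      using same_side_in_cell by auto
    then show "estimate qf est N z y = estimate qf est N p y"
      unfolding Q_def by (rule estimate_eq_if_same_side)
  qed
qed

section \<open>Queries outside a short window\<close>

definition cell_end :: "real set \<Rightarrow> (nat \<Rightarrow> real) \<Rightarrow> nat \<Rightarrow> real" where
  "cell_end Q p m = (if even m then cell_lo Q (p (m div 2)) else cell_hi Q (p (m div 2)))"

context
  fixes Q :: "real set" and p :: "nat \<Rightarrow> real" and L :: nat and \<delta> \<epsilon> :: real
  assumes finite_Q: "finite Q"
    and p_unit: "\<forall>i<L. p i \<in> {0..<1}"
    and p_separated: "separated \<delta> L p"
    and short_cells: "\<forall>i<L. cell_hi Q (p i) - cell_lo Q (p i) \<le> \<epsilon>"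
    and eps_delta: "2 * \<epsilon> < \<delta>"
begin

lemma cell_around_point:
  assumes "i < L"
  shows "cell_lo Q (p i) \<le> p i" "p i < cell_hi Q (p i)"
    "p i - \<epsilon> \<le> cell_lo Q (p i)" "cell_hi Q (p i) \<le> p i + \<epsilon>"
proof -
  show lo: "cell_lo Q (p i) \<le> p i" and hi: "p i < cell_hi Q (p i)"
    using assms p_unit finite_Q by (simp_all add: cell_lo_le less_cell_hi)
  show "p i - \<epsilon> \<le> cell_lo Q (p i)" "cell_hi Q (p i) \<le> p i + \<epsilon>"
    using lo hi short_cells assms by fastforce+
qed

lemma cell_end_strict_mono: "strict_mono_on {..<2 * L} (cell_end Q p)"
proof -
  have step: "cell_end Q p m < cell_end Q p (Suc m)" if "Suc m < 2 * L" for m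
  proof (cases "even m")
    case True
    have "m div 2 < L"
      using that by simp
    with True show ?thesis
      using cell_around_point[of "m div 2"] by (simp add: cell_end_def)
  next
    case False
    then obtain i where m: "m = 2 * i + 1"
      by (auto elim: oddE)
    with that have "Suc i < L"
      by simp
    then have "\<delta> < p (Suc i) - p i"
      using p_separated by (simp add: separated_def)
    then show ?thesis
      using m \<open>Suc i < L\<close> cell_around_point[of i] cell_around_point[of "Suc i"] eps_delta
      by (simp add: cell_end_def)
  qed
  show ?thesis
  proof (rule strict_mono_onI)
    fix m m' assume "m \<in> {..<2 * L}" "m' \<in> {..<2 * L}" "m < m'"
    moreover from this have "{m..<m'} \<subseteq> {m. Suc m < 2 * L}"
      by auto
    ultimately show "cell_end Q p m < cell_end Q p m'"
      using lift_Suc_mono_less_ivl[of "{m. Suc m < 2 * L}" "cell_end Q p" m m'] step by blast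
  qed
qed

lemma cell_end_mem: "cell_end Q p m \<in> insert 0 (insert 1 Q)"
  using cell_lo_cases[OF finite_Q, of "p (m div 2)"] cell_hi_cases[OF finite_Q, of "p (m div 2)"]
  by (auto simp: cell_end_def)

lemma cell_end_outside_window:
  assumes "a \<in> insert 0 Q" "b \<in> insert 1 Q" "m < 2 * L"
    and "\<not> (a \<le> p (m div 2) \<and> p (m div 2) < b)"
  shows "cell_end Q p m \<notin> {a<..<b}"
proof -
  let ?i = "m div 2"
  have i: "?i < L"
    using assms(3) by simp
  note cell = cell_around_point[OF i]
  show ?thesis
  proof (cases "p ?i < a")
    case True
    with i p_unit assms(1) have "a \<in> Q"
      by fastforce
    then have "cell_hi Q (p ?i) \<le> a"
      using query_outside_cell[OF finite_Q, of a "p ?i"] True cell by linarith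
    then show ?thesis
      using cell by (auto simp: cell_end_def)
  next
    case False
    with assms(4) have "b \<le> p ?i"
      by simp
    with i p_unit assms(2) have "b \<in> Q"
      by fastforce
    then have "b \<le> cell_lo Q (p ?i)"
      using query_outside_cell[OF finite_Q, of b "p ?i"] \<open>b \<le> p ?i\<close> cell by linarith
    then show ?thesis
      using cell by (auto simp: cell_end_def)
  qed
qed

lemma cell_end_less: "m < m' \<Longrightarrow> m' < 2 * L \<Longrightarrow> cell_end Q p m < cell_end Q p m'"
  using cell_end_strict_mono by (auto simp: strict_mono_on_def)

lemma point_in_window_unique:
  assumes "b - a \<le> \<delta>" "i < L" "j < L" "a \<le> p i" "p i < b" "a \<le> p j" "p j < b"
  shows "i = j"
proof (rule ccontr)
  assume "i \<noteq> j"
  then have "\<delta> < p i - p j \<or> \<delta> < p j - p i"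
    using p_separated assms(2,3) unfolding separated_def by (metis linorder_neqE_nat)
  then show False
    using assms by linarith
qed

(* Otherwise a \<le> p (j - 1) + \<epsilon> and p (j + 1) - \<epsilon> \<le> b, so p (j + 1) - p (j - 1) < \<delta> + 2 \<epsilon> < 2 \<delta>. *)
lemma window_ends_not_cell_ends:
  assumes j: "j < L" "a \<le> p j" "p j < b" and short: "b - a \<le> \<delta>"
    and m1: "m1 < 2 * L" "m1 \<noteq> 2 * j" "m1 \<noteq> 2 * j + 1"
    and m2: "m2 < 2 * L" "m2 \<noteq> 2 * j" "m2 \<noteq> 2 * j + 1"
  shows "a \<noteq> cell_end Q p m1 \<or> b \<noteq> cell_end Q p m2"
proof (rule ccontr)
  assume "\<not> (a \<noteq> cell_end Q p m1 \<or> b \<noteq> cell_end Q p m2)"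
  then have a: "a = cell_end Q p m1" and b: "b = cell_end Q p m2"
    by simp_all
  have cell_j: "cell_end Q p (2 * j) \<le> p j" "p j < cell_end Q p (2 * j + 1)"
    using cell_around_point[OF j(1)] by (simp_all add: cell_end_def)
  have "m1 < 2 * j"
    using cell_end_less[of "2 * j + 1" m1] m1 a cell_j j(2) by fastforce
  then have "1 \<le> j" "m1 \<le> 2 * (j - 1) + 1" "j - 1 < L"
    using j(1) by auto
  then have "a \<le> cell_end Q p (2 * (j - 1) + 1)"
    using cell_end_less[of m1 "2 * (j - 1) + 1"] a j(1) by (cases "m1 = 2 * (j - 1) + 1") auto
  then have "a \<le> p (j - 1) + \<epsilon>"
    using cell_around_point(4)[OF \<open>j - 1 < L\<close>] by (simp add: cell_end_def)
  have "2 * j + 1 < m2"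
    using cell_end_less[of m2 "2 * j"] m2 b cell_j j(1,3) by fastforce
  with m2 have "2 * (j + 1) \<le> m2" "j + 1 < L"
    by auto
  then have "cell_end Q p (2 * (j + 1)) \<le> b"
    using cell_end_less[of "2 * (j + 1)" m2] b m2(1) by (cases "m2 = 2 * (j + 1)") auto
  then have "p (j + 1) - \<epsilon> \<le> b"
    using cell_around_point(3)[OF \<open>j + 1 < L\<close>] by (simp add: cell_end_def)
  have "\<delta> < p j - p (j - 1)" "\<delta> < p (j + 1) - p j"
    using p_separated \<open>1 \<le> j\<close> \<open>j + 1 < L\<close> unfolding separated_def by auto
  with \<open>a \<le> p (j - 1) + \<epsilon>\<close> \<open>p (j + 1) - \<epsilon> \<le> b\<close> short eps_delta show False
    by linarith
qed

lemma card_outside_empty_window: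
  assumes "a \<in> insert 0 Q" "b \<in> insert 1 Q" "\<forall>j<L. \<not> (a \<le> p j \<and> p j < b)"
  shows "2 * L \<le> card (Q - {a<..<b}) + 2"
proof -
  have "cell_end Q p ` {..<2 * L} \<subseteq> insert 0 (insert 1 (Q - {a<..<b}))"
    using cell_end_mem cell_end_outside_window[OF assms(1,2)] assms(3) by fastforce
  then have "card (cell_end Q p ` {..<2 * L}) \<le> card (insert 0 (insert 1 (Q - {a<..<b})))"
    by (intro card_mono) (simp_all add: finite_Q)
  also have "\<dots> \<le> card (Q - {a<..<b}) + 2"
    using finite_Q by (simp add: card_insert_if)
  finally show ?thesis
    using card_image[OF strict_mono_on_imp_inj_on[OF cell_end_strict_mono]] by simp
qed

lemma cell_end_outside_other_cell:
  assumes a: "a \<in> insert 0 Q" and b: "b \<in> insert 1 Q" and short: "b - a \<le> \<delta>"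
    and j: "j < L" "a \<le> p j" "p j < b"
    and m: "m < 2 * L" "m \<noteq> 2 * j" "m \<noteq> 2 * j + 1"
  shows "cell_end Q p m \<in> insert 0 (insert 1 (Q - {a<..<b}))"
proof -
  have "m div 2 \<noteq> j" "m div 2 < L"
    using m by presburger+
  then have "\<not> (a \<le> p (m div 2) \<and> p (m div 2) < b)"
    using point_in_window_unique[OF short _ j(1) _ _ j(2,3)] by blast
  then show ?thesis
    using cell_end_mem[of m] cell_end_outside_window[OF a b m(1)] by auto
qed

lemma card_outside_window_around_point:
  assumes a: "a \<in> insert 0 Q" and b: "b \<in> insert 1 Q" and short: "b - a \<le> \<delta>"
    and j: "j < L" "a \<le> p j" "p j < b"
  shows "2 * L \<le> card (Q - {a<..<b}) + 3"
proof -
  define W where "W = insert 0 (insert 1 (Q - {a<..<b}))"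
  define Z where "Z = cell_end Q p ` ({..<2 * L} - {2 * j, 2 * j + 1})"
  have "card ({..<2 * L} - {2 * j, 2 * j + 1}) = 2 * L - 2"
    using j(1) by (simp add: card_Diff_subset)
  then have card_Z: "card Z = 2 * L - 2"
    unfolding Z_def using inj_on_subset[OF strict_mono_on_imp_inj_on[OF cell_end_strict_mono]]
    by (simp add: card_image)
  have "Z \<subseteq> W"
  proof
    fix z assume "z \<in> Z"
    then obtain m where "m < 2 * L" "m \<noteq> 2 * j" "m \<noteq> 2 * j + 1" "z = cell_end Q p m"
      by (auto simp: Z_def)
    then show "z \<in> W"
      using cell_end_outside_other_cell[OF a b short j] by (simp add: W_def)
  qed
  have "a \<in> W" "b \<in> W"
    using a b short j by (auto simp: W_def)
  have "\<not> (a \<in> Z \<and> b \<in> Z)"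
  proof
    assume "a \<in> Z \<and> b \<in> Z"
    then obtain m1 m2 where "m1 < 2 * L" "m1 \<noteq> 2 * j" "m1 \<noteq> 2 * j + 1" "a = cell_end Q p m1"
      "m2 < 2 * L" "m2 \<noteq> 2 * j" "m2 \<noteq> 2 * j + 1" "b = cell_end Q p m2"
      by (auto simp: Z_def)
    then show False
      using window_ends_not_cell_ends[OF j short] by blast
  qed
  then have "card Z + 1 \<le> card (Z \<union> {a, b})"
    by (auto simp: Z_def card_insert_if)
  also have "\<dots> \<le> card W"
    using \<open>Z \<subseteq> W\<close> \<open>a \<in> W\<close> \<open>b \<in> W\<close> by (intro card_mono) (auto simp: W_def finite_Q)
  also have "\<dots> \<le> card (Q - {a<..<b}) + 2"
    using finite_Q by (simp add: W_def card_insert_if)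
  finally show ?thesis
    using card_Z j(1) by linarith
qed

lemma card_outside_window:
  assumes "a \<in> insert 0 Q" "b \<in> insert 1 Q" "b - a \<le> \<delta>"
  shows "2 * L \<le> card (Q - {a<..<b}) + 3"
proof (cases "\<exists>j<L. a \<le> p j \<and> p j < b")
  case True
  then obtain j where "j < L" "a \<le> p j" "p j < b"
    by blast
  then show ?thesis
    by (rule card_outside_window_around_point[OF assms])
next
  case False
  then show ?thesis
    using card_outside_empty_window[OF assms(1,2)] by simp
qed

end

section \<open>The lower bound\<close>

lemma adv_window:
  assumes "adv_hi qf y N - adv_lo qf y N \<le> \<delta>" "\<delta> < 1"
  obtains k where "k \<le> N" "\<delta> / 2 < adv_hi qf y k - adv_lo qf y k"
    "adv_hi qf y k - adv_lo qf y k \<le> \<delta>"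
proof
  define k where "k = (LEAST k. adv_hi qf y k - adv_lo qf y k \<le> \<delta>)"
  show "k \<le> N" "adv_hi qf y k - adv_lo qf y k \<le> \<delta>"
    unfolding k_def using assms(1) by (auto intro: Least_le LeastI)
  then have "k \<noteq> 0"
    using assms(2) by (cases "k = 0") auto
  then have "\<not> adv_hi qf y (k - 1) - adv_lo qf y (k - 1) \<le> \<delta>"
    unfolding k_def by (intro not_less_Least) simp
  moreover have "(adv_hi qf y (k - 1) - adv_lo qf y (k - 1)) / 2 \<le> adv_hi qf y k - adv_lo qf y k"
    using adv_length_halves[of qf y "k - 1"] \<open>k \<noteq> 0\<close> by simp
  ultimately show "\<delta> / 2 < adv_hi qf y k - adv_lo qf y k"
    by argo
qed

lemma adv_split_query_in_window:
  assumes "k \<le> j" "adv_splits qf y j"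
  shows "adv_query qf y j \<in> {adv_lo qf y k<..<adv_hi qf y k}"
  using assms adv_lo_mono[of k j qf y] adv_hi_antimono[of k j qf y]
  by (auto simp: adv_splits_def)

lemma accurate_strategy_length_lower:
  assumes "accurate \<epsilon> N Yc qf est" "1 \<le> Yc"
  shows "1 \<le> 2 ^ N * \<epsilon>"
proof -
  let ?u = "card {j\<in>{0..<N}. adv_splits qf 1 j}"
  have "1 \<le> 2 ^ ?u * (adv_hi qf 1 N - adv_lo qf 1 N)"
    using adv_length_le_pow_splits[of 0 N qf 1] by simp
  also have "\<dots> \<le> 2 ^ N * \<epsilon>"
  proof (rule mult_mono)
    have "?u \<le> N"
      by (rule order_trans[OF card_mono[of "{0..<N}"]]) auto
    then show "(2::real) ^ ?u \<le> 2 ^ N"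
      by (intro power_increasing) auto
    show "adv_hi qf 1 N - adv_lo qf 1 N \<le> \<epsilon>"
      using accurate_adv_length_le assms by simp
  qed (use adv_interval[of qf 1 N] in auto)
  finally show ?thesis .
qed

lemma adversary_window_queries:
  assumes acc: "accurate \<epsilon> N Yc qf est" and y: "y \<in> {1..Yc}"
    and distinct: "distinct (queries qf N (adv_lo qf y N) y)" and "0 < \<epsilon>" "\<epsilon> < \<delta>" "\<delta> < 1"
  defines "Q \<equiv> set (queries qf N (adv_lo qf y N) y)"
  obtains a b u where "a \<in> insert 0 Q" "b \<in> insert 1 Q" "b - a \<le> \<delta>"
    "log 2 (\<delta> / \<epsilon>) < real u + 1" "u \<le> card (Q \<inter> {a<..<b})"
proof -
  have inj: "inj_on (adv_query qf y) {..<N}"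
    using distinct by (simp add: queries_adv_lo distinct_map atLeast_upt)
  have Q: "Q = adv_query qf y ` {..<N}"
    by (simp add: Q_def queries_adv_lo atLeast_upt)
  have "adv_hi qf y N - adv_lo qf y N \<le> \<delta>"
    using accurate_adv_length_le[OF acc y] assms(5) by linarith
  then obtain k where k: "k \<le> N" "\<delta> / 2 < adv_hi qf y k - adv_lo qf y k"
      "adv_hi qf y k - adv_lo qf y k \<le> \<delta>"
    using adv_window assms(6) by blast
  define a b where "a = adv_lo qf y k" and "b = adv_hi qf y k"
  define U where "U = {j\<in>{k..<N}. adv_splits qf y j}"
  have "b - a \<le> 2 ^ card U * (adv_hi qf y N - adv_lo qf y N)"
    unfolding a_def b_def U_def using k(1) by (rule adv_length_le_pow_splits)
  also have "\<dots> \<le> 2 ^ card U * \<epsilon>"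
    using accurate_adv_length_le[OF acc y] by (intro mult_left_mono) auto
  finally have "\<delta> / \<epsilon> < 2 powr real (card U + 1)"
    using k(2) assms(4) by (subst powr_realpow) (auto simp: a_def b_def pos_divide_less_eq)
  then have "log 2 (\<delta> / \<epsilon>) < real (card U) + 1"
    using assms(4,5) by (subst log_less_iff) (auto simp: add.commute)
  moreover have "card U \<le> card (Q \<inter> {a<..<b})"
  proof -
    have "inj_on (adv_query qf y) U"
      by (rule inj_on_subset[OF inj]) (auto simp: U_def)
    then have "card U = card (adv_query qf y ` U)"
      by (simp add: card_image)
    also have "\<dots> \<le> card (Q \<inter> {a<..<b})"
      using adv_split_query_in_window by (intro card_mono) (auto simp: U_def Q a_def b_def)
    finally show ?thesis .
  qed
  moreover have "a \<in> insert 0 Q" "b \<in> insert 1 Q"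
    using adv_lo_cases[of qf y k] adv_hi_cases[of qf y k] k(1) by (auto simp: Q a_def b_def)
  ultimately show ?thesis
    using that k(3) by (simp add: a_def b_def)
qed

lemma private_separated_short_cells:
  assumes priv: "is_private \<epsilon> \<delta> L N Yc qf est" and "x \<in> {0..<1}" "y \<in> {1..Yc}" "0 < \<delta>" "1 \<le> L"
  defines "Q \<equiv> set (queries qf N x y)"
  obtains p where "\<forall>i<L. p i \<in> {0..<1}" "separated \<delta> L p"
    "\<forall>i<L. cell_hi Q (p i) - cell_lo Q (p i) \<le> \<epsilon>"
proof -
  have "queries qf N x y \<in> Qset N Yc qf x"
    using assms(3) by (auto simp: Qset_def)
  then have "L \<le> cover_number \<delta> (info_set N Yc qf (queries qf N x y))"
    using priv assms(2) by (simp add: is_private_def)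
  moreover have "info_set N Yc qf (queries qf N x y) \<subseteq> {0..<1}"
    by (auto simp: info_set_def)
  ultimately obtain p where p: "\<forall>i<L. p i \<in> info_set N Yc qf (queries qf N x y)" "separated \<delta> L p"
    using separated_points_if_cover_number_ge assms(4,5) by blast
  then have p_unit: "\<forall>i<L. p i \<in> {0..<1}"
    by (simp add: info_set_def)
  have "cell_hi Q (p i) - cell_lo Q (p i) \<le> \<epsilon>" if "i < L" for i
  proof -
    have "queries qf N x y \<in> Qset N Yc qf (p i)"
      using p(1) that by (simp add: info_set_def)
    then obtain y' where "y' \<in> {1..Yc}" "queries qf N x y = queries qf N (p i) y'"
      by (auto simp: Qset_def)
    then show ?thesis
      using accurate_cell_length_le[OF accurate_if_private[OF priv] _ p_unit[rule_format, OF that]]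
      by (simp add: Q_def)
  qed
  with that p_unit p(2) show ?thesis
    by blast
qed

lemma private_strategy_length_lower:
  assumes strat: "is_strategy N Yc qf est" and priv: "is_private \<epsilon> \<delta> L N Yc qf est"
    and "0 < \<epsilon>" "2 * \<epsilon> < \<delta>" "\<delta> < 1" "1 \<le> L"
  shows "log 2 (\<delta> / \<epsilon>) < real N + 4 - 2 * real L"
proof -
  let ?x = "adv_lo qf 1 N"
  let ?Q = "set (queries qf N ?x 1)"
  have y: "1 \<in> {1..Yc}"
    using strat by (simp add: is_strategy_def)
  have x: "?x \<in> {0..<1}"
    using adv_interval[of qf 1 N] by simp
  then have distinct: "distinct (queries qf N ?x 1)"
    using strat y unfolding is_strategy_def by blast
  have "\<epsilon> < \<delta>" "0 < \<delta>"
    using assms(3,4) by simp_all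
  obtain a b u where window: "a \<in> insert 0 ?Q" "b \<in> insert 1 ?Q" "b - a \<le> \<delta>"
      "log 2 (\<delta> / \<epsilon>) < real u + 1" "u \<le> card (?Q \<inter> {a<..<b})"
    by (rule adversary_window_queries[OF accurate_if_private[OF priv] y distinct assms(3)
          \<open>\<epsilon> < \<delta>\<close> assms(5)])
  obtain p where p: "\<forall>i<L. p i \<in> {0..<1}" "separated \<delta> L p"
      "\<forall>i<L. cell_hi ?Q (p i) - cell_lo ?Q (p i) \<le> \<epsilon>"
    by (rule private_separated_short_cells[OF priv x y \<open>0 < \<delta>\<close> assms(6)])
  have "2 * L \<le> card (?Q - {a<..<b}) + 3"
    by (rule card_outside_window[OF finite_set p assms(4) window(1-3)])
  moreover have "card ?Q = card (?Q \<inter> {a<..<b}) + card (?Q - {a<..<b})"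
    by (simp add: card_Int_Diff)
  moreover have "card ?Q = N"
    using distinct by (simp add: distinct_card)
  ultimately show ?thesis
    using window(4,5) by linarith
qed

section \<open>The decoy strategy\<close>

definition nat_of_bits :: "bool list \<Rightarrow> nat" where
  "nat_of_bits bs = foldl (\<lambda>n b. 2 * n + of_bool b) 0 bs"

lemma nat_of_bits_snoc [simp]: "nat_of_bits (bs @ [b]) = 2 * nat_of_bits bs + of_bool b"
  by (simp add: nat_of_bits_def)

lemma nat_of_bits_less: "nat_of_bits bs < 2 ^ length bs"
  by (induction bs rule: rev_induct) (auto simp: nat_of_bits_def)

lemma nat_floor_double:
  fixes v :: real
  assumes "0 \<le> v"
  shows "nat \<lfloor>2 * v\<rfloor> = 2 * nat \<lfloor>v\<rfloor> + of_bool (2 * real (nat \<lfloor>v\<rfloor>) + 1 \<le> 2 * v)"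
proof -
  have "0 \<le> \<lfloor>v\<rfloor>"
    using assms by simp
  then have f: "real (nat \<lfloor>v\<rfloor>) = of_int \<lfloor>v\<rfloor>"
    by simp
  have bounds: "of_int \<lfloor>v\<rfloor> \<le> v" "v < of_int \<lfloor>v\<rfloor> + 1"
    by linarith+
  have "\<lfloor>2 * v\<rfloor> = 2 * \<lfloor>v\<rfloor> + of_bool (2 * real (nat \<lfloor>v\<rfloor>) + 1 \<le> 2 * v)"
  proof (cases "2 * real_of_int \<lfloor>v\<rfloor> + 1 \<le> 2 * v")
    case True
    then have "\<lfloor>2 * v\<rfloor> = 2 * \<lfloor>v\<rfloor> + 1"
      unfolding floor_eq_iff of_int_add of_int_mult of_int_1 of_int_numeral using bounds by linarith
    with True show ?thesis
      by (simp add: f)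
  next
    case False
    then have "\<lfloor>2 * v\<rfloor> = 2 * \<lfloor>v\<rfloor>"
      unfolding floor_eq_iff of_int_mult of_int_numeral using bounds by linarith
    with False show ?thesis
      by (simp add: f)
  qed
  then show ?thesis
    using \<open>0 \<le> \<lfloor>v\<rfloor>\<close> by (simp add: nat_add_distrib nat_mult_distrib)
qed

lemma odd_times_pow2_neq:
  fixes a a' :: nat
  assumes "s < s'"
  shows "(2 * a + 1) * 2 ^ s' \<noteq> (2 * a' + 1) * 2 ^ s"
proof
  assume "(2 * a + 1) * 2 ^ s' = (2 * a' + 1) * 2 ^ s"
  moreover have "(2::nat) ^ s' = 2 ^ s * 2 ^ (s' - s)"
    using assms by (simp add: power_add[symmetric])
  ultimately have "2 ^ s * ((2 * a + 1) * 2 ^ (s' - s)) = 2 ^ s * (2 * a' + 1)"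
    by (metis mult.assoc mult.commute)
  then have "(2 * a + 1) * 2 ^ (s' - s) = 2 * a' + 1"
    by (metis mult_left_cancel power_not_zero zero_neq_numeral)
  moreover have "even ((2 * a + 1) * (2::nat) ^ (s' - s))"
    using assms by simp
  ultimately show False
    by simp
qed

lemma odd_dyadic_eq_imp_level_eq:
  fixes p p' :: nat
  assumes "(2 * real p + 1) / 2 ^ (t + 1) = (2 * real p' + 1) / 2 ^ (t' + 1)"
  shows "t = t'"
proof -
  have "(2 * real p + 1) * 2 ^ (t' + 1) = (2 * real p' + 1) * 2 ^ (t + 1)"
    using assms by (simp add: frac_eq_eq del: power_Suc)
  then have "real ((2 * p + 1) * 2 ^ (t' + 1)) = real ((2 * p' + 1) * 2 ^ (t + 1))"
    by (simp only: of_nat_mult of_nat_add of_nat_power of_nat_numeral of_nat_1)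
  then have "(2 * p + 1) * 2 ^ (t' + 1) = (2 * p' + 1) * 2 ^ (t + 1)"
    by (simp only: of_nat_eq_iff)
  then show ?thesis
    using odd_times_pow2_neq[of "t + 1" "t' + 1" p p'] odd_times_pow2_neq[of "t' + 1" "t + 1" p' p]
    by (metis add_right_cancel linorder_neqE_nat)
qed

lemma length_filter_less_upt:
  assumes "k \<le> n"
  shows "length (filter (\<lambda>i. i < k) [0..<n]) = k"
proof -
  from assms have "[0..<n] = [0..<k] @ [k..<n]"
    by (metis le_add_diff_inverse upt_add_eq_append zero_le)
  then show ?thesis
    by simp
qed

locale decoy_strategy =
  fixes \<epsilon> :: real and L M :: nat
  assumes eps_pos: "0 < \<epsilon>" and two_le_L: "2 \<le> L" and L_eps: "real L * \<epsilon> < 1"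
    and gap_resolution: "(1 - \<epsilon>) / real (L - 1) - \<epsilon> \<le> 2 ^ M * \<epsilon>"
begin

definition scan_len :: nat where
  "scan_len = 2 * L - 2"
definition spacing :: real where
  "spacing = (1 - \<epsilon>) / real (L - 1)"
definition gap_width :: real where
  "gap_width = spacing - \<epsilon>"

definition scan_point :: "nat \<Rightarrow> real" where
  "scan_point m =
    (if even m then real (m div 2) * spacing + \<epsilon> else real (m div 2 + 1) * spacing)"

definition in_gap :: "real \<Rightarrow> nat \<Rightarrow> bool" where
  "in_gap x j \<longleftrightarrow> j < L - 1 \<and> real j * spacing + \<epsilon> \<le> x \<and> x < real (j + 1) * spacing"
definition in_slot :: "real \<Rightarrow> nat \<Rightarrow> bool" where
  "in_slot x i \<longleftrightarrow> i < L \<and> real i * spacing \<le> x \<and> x < real i * spacing + \<epsilon>"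

(* The midpoint of the p-th of the 2^t dyadic subintervals of gap j. *)
definition bisect_point :: "nat \<Rightarrow> nat \<Rightarrow> nat \<Rightarrow> real" where
  "bisect_point j p t = real j * spacing + \<epsilon> + gap_width * (2 * real p + 1) / 2 ^ (t + 1)"
definition gap_coord :: "real \<Rightarrow> nat \<Rightarrow> real" where
  "gap_coord x j = (x - (real j * spacing + \<epsilon>)) / gap_width"
definition dyadic_index :: "real \<Rightarrow> nat \<Rightarrow> nat \<Rightarrow> nat" where
  "dyadic_index x j t = nat \<lfloor>2 ^ t * gap_coord x j\<rfloor>"

(* A seed encodes a gap seed_gap y and an M-bit index into it; seed_index y t is its t-bit
   prefix. *)
definition num_seeds :: nat where
  "num_seeds = (L - 1) * 2 ^ M"
definition seed_gap :: "nat \<Rightarrow> nat" where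
  "seed_gap y = (y - 1) div 2 ^ M"
definition seed_index :: "nat \<Rightarrow> nat \<Rightarrow> nat" where
  "seed_index y t = (y - 1) mod 2 ^ M div 2 ^ (M - t)"

definition scan_count :: "bool list \<Rightarrow> nat" where
  "scan_count rs = length (filter id (take scan_len rs))"

definition decoy_qf :: "nat \<Rightarrow> bool list \<Rightarrow> real" where
  "decoy_qf y rs =
    (if length rs < scan_len then scan_point (length rs)
     else let k = scan_count rs; t = length rs - scan_len in
       if odd k then bisect_point (k div 2) (nat_of_bits (drop scan_len rs)) t
       else bisect_point (seed_gap y) (seed_index y t) t)"

definition decoy_est :: "nat \<Rightarrow> bool list \<Rightarrow> real" where
  "decoy_est y rs =
    (let k = scan_count rs in
     if odd k then bisect_point (k div 2) (nat_of_bits (drop scan_len rs)) M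
     else real (k div 2) * spacing + \<epsilon> / 2)"

definition num_queries :: nat where
  "num_queries = scan_len + M"

lemma scan_len_eq: "scan_len = 2 * (L - 1)"
  using two_le_L by (simp add: scan_len_def)

lemma eps_less_spacing: "\<epsilon> < spacing"
proof -
  have "real (L - 1) * \<epsilon> < 1 - \<epsilon>"
    using L_eps two_le_L by (simp add: of_nat_diff algebra_simps)
  moreover have "0 < real (L - 1)"
    using two_le_L by simp
  ultimately show ?thesis
    by (simp add: spacing_def field_simps)
qed

lemma gap_width_pos: "0 < gap_width"
  using eps_less_spacing by (simp add: gap_width_def)

lemma spacing_last: "real (L - 1) * spacing = 1 - \<epsilon>"
  using two_le_L by (simp add: spacing_def)

lemma inverse_L_less_spacing: "1 / real L < spacing"
proof -
  have "real L - 1 < real L * (1 - \<epsilon>)"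
    using L_eps by (simp add: algebra_simps)
  then have "1 / real L < (1 - \<epsilon>) / (real L - 1)"
    using two_le_L by (simp add: field_simps)
  then show ?thesis
    using two_le_L by (simp add: spacing_def of_nat_diff)
qed

lemma scan_point_strict_mono: "m < m' \<Longrightarrow> scan_point m < scan_point m'"
proof (rule lift_Suc_mono_less[of scan_point])
  show "scan_point n < scan_point (Suc n)" for n
    using eps_less_spacing eps_pos
    by (cases "even n") (auto simp: scan_point_def algebra_simps elim!: evenE oddE)
qed

lemma scan_point_mono: "m \<le> m' \<Longrightarrow> scan_point m \<le> scan_point m'"
  using scan_point_strict_mono[of m m'] by (cases "m = m'") auto

lemma scan_point_even [simp]: "scan_point (2 * j) = real j * spacing + \<epsilon>"
  by (simp add: scan_point_def)

lemma scan_point_odd [simp]: "scan_point (Suc (2 * j)) = real (Suc j) * spacing"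
  by (simp add: scan_point_def)

lemma scan_point_unit:
  assumes "m < scan_len"
  shows "scan_point m \<in> {0..<1}"
proof -
  from assms have "scan_point m \<le> scan_point (2 * (L - 2) + 1)"
    using two_le_L by (intro scan_point_mono) (simp add: scan_len_def)
  also have "\<dots> = real (Suc (L - 2)) * spacing"
    by simp
  also have "\<dots> = real (L - 1) * spacing"
    using two_le_L by (simp add: Suc_diff_Suc numeral_2_eq_2)
  finally show ?thesis
    using spacing_last eps_pos eps_less_spacing by (auto simp: scan_point_def)
qed

lemma scan_point_le_iff_in_gap:
  assumes "in_gap x j"
  shows "(scan_point m \<le> x) = (m < 2 * j + 1)"
proof (cases "m < 2 * j + 1")
  case True
  then show ?thesis
    using assms scan_point_mono[of m "2 * j"] by (simp add: in_gap_def)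
next
  case False
  then show ?thesis
    using assms scan_point_mono[of "2 * j + 1" m] by (simp add: in_gap_def)
qed

lemma scan_point_le_iff_in_slot:
  assumes slot: "in_slot x i"
  shows "(scan_point m \<le> x) = (m < 2 * i)"
proof (cases "m < 2 * i")
  case True
  then obtain j where "i = Suc j" "m \<le> 2 * j + 1"
    by (cases i) auto
  then show ?thesis
    using slot scan_point_mono[of m "2 * j + 1"] by (simp add: in_slot_def)
next
  case False
  then show ?thesis
    using slot scan_point_mono[of "2 * i" m] by (simp add: in_slot_def)
qed

lemma in_gap_or_in_slot:
  assumes "x \<in> {0..<1}"
  shows "(\<exists>j. in_gap x j) \<or> (\<exists>i. in_slot x i)"
proof -
  define i where "i = nat \<lfloor>x / spacing\<rfloor>"
  have d: "0 < spacing"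
    using eps_less_spacing eps_pos by simp
  have "real i = of_int \<lfloor>x / spacing\<rfloor>"
    using assms d by (simp add: i_def)
  then have "real i \<le> x / spacing" "x / spacing < real i + 1"
    by linarith+
  then have "real i * spacing \<le> x" "x < real (i + 1) * spacing"
    using d by (simp_all add: pos_le_divide_eq pos_divide_less_eq algebra_simps)
  moreover have "i < L"
  proof (rule ccontr)
    assume "\<not> i < L"
    then have "real (L - 1) * spacing + spacing \<le> real i * spacing"
      using d two_le_L by (simp add: of_nat_diff algebra_simps)
    then show False
      using \<open>real i * spacing \<le> x\<close> assms spacing_last eps_less_spacing by simp
  qed
  moreover have "i < L - 1" if "real i * spacing + \<epsilon> \<le> x"
    using that assms spacing_last \<open>i < L\<close> by (cases "i = L - 1") auto
  ultimately show ?thesis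
    unfolding in_gap_def in_slot_def by (metis not_le)
qed

lemma resps_scan: "k \<le> scan_len \<Longrightarrow> resps decoy_qf x y k = map (\<lambda>m. scan_point m \<le> x) [0..<k]"
  by (induction k) (simp_all add: Let_def decoy_qf_def)

lemma scan_count_resps:
  assumes "\<kappa> \<le> scan_len" "\<forall>m<scan_len. (scan_point m \<le> x) = (m < \<kappa>)" "scan_len \<le> n"
  shows "scan_count (resps decoy_qf x y n) = \<kappa>"
proof -
  have "take scan_len (resps decoy_qf x y n) = map (\<lambda>m. scan_point m \<le> x) [0..<scan_len]"
    using assms(3) by (simp add: take_resps resps_scan)
  then have "scan_count (resps decoy_qf x y n) = length (filter (\<lambda>m. scan_point m \<le> x) [0..<scan_len])"
    by (simp add: scan_count_def filter_map comp_def)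
  also have "filter (\<lambda>m. scan_point m \<le> x) [0..<scan_len] = filter (\<lambda>m. m < \<kappa>) [0..<scan_len]"
    using assms(2) by (intro filter_cong) auto
  finally show ?thesis
    using length_filter_less_upt[OF assms(1)] by simp
qed

lemma queries_decoy_qf:
  "queries decoy_qf num_queries x y =
     map scan_point [0..<scan_len] @ map (\<lambda>t. decoy_qf y (resps decoy_qf x y (scan_len + t))) [0..<M]"
proof -
  have "[0..<scan_len + M] = [0..<scan_len] @ [scan_len..<scan_len + M]"
    by (rule upt_add_eq_append) simp
  moreover have "[scan_len..<scan_len + M] = map (\<lambda>t. t + scan_len) [0..<M]"
    by (simp add: map_add_upt add.commute)
  moreover have
    "map (\<lambda>k. decoy_qf y (resps decoy_qf x y k)) [0..<scan_len] = map scan_point [0..<scan_len]"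
    by (intro map_cong) (auto simp: decoy_qf_def)
  ultimately show ?thesis
    by (simp add: queries_def num_queries_def add.commute)
qed

lemma decoy_qf_after_scan:
  assumes "scan_len \<le> length rs"
  shows "decoy_qf y rs =
    (if odd (scan_count rs)
     then bisect_point (scan_count rs div 2) (nat_of_bits (drop scan_len rs)) (length rs - scan_len)
     else bisect_point (seed_gap y) (seed_index y (length rs - scan_len)) (length rs - scan_len))"
  using assms by (simp add: decoy_qf_def Let_def)

lemma scan_count_in_gap: "in_gap x j \<Longrightarrow> scan_len \<le> n \<Longrightarrow> scan_count (resps decoy_qf x y n) = 2 * j + 1"
  by (intro scan_count_resps) (auto simp: scan_point_le_iff_in_gap in_gap_def scan_len_eq)

lemma scan_count_in_slot: "in_slot x i \<Longrightarrow> scan_len \<le> n \<Longrightarrow> scan_count (resps decoy_qf x y n) = 2 * i"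
  by (intro scan_count_resps) (auto simp: scan_point_le_iff_in_slot in_slot_def scan_len_eq)

lemma gap_coord_eq: "x = real j * spacing + \<epsilon> + gap_width * gap_coord x j"
  using gap_width_pos by (simp add: gap_coord_def)

lemma gap_coord_unit: "in_gap x j \<Longrightarrow> gap_coord x j \<in> {0..<1}"
  using gap_width_pos by (auto simp: in_gap_def gap_coord_def gap_width_def divide_less_eq algebra_simps)

lemma bisect_point_le_iff:
  "(bisect_point j p t \<le> real j * spacing + \<epsilon> + gap_width * \<theta>) = (2 * real p + 1 \<le> 2 ^ (t + 1) * \<theta>)"
proof -
  have "(bisect_point j p t \<le> real j * spacing + \<epsilon> + gap_width * \<theta>)
      = (gap_width * ((2 * real p + 1) / 2 ^ (t + 1)) \<le> gap_width * \<theta>)"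
    by (simp add: bisect_point_def)
  also have "\<dots> = ((2 * real p + 1) / 2 ^ (t + 1) \<le> \<theta>)"
    using gap_width_pos by (rule mult_le_cancel_left_pos)
  also have "\<dots> = (2 * real p + 1 \<le> 2 ^ (t + 1) * \<theta>)"
    by (simp add: divide_le_eq mult.commute)
  finally show ?thesis .
qed

lemma resps_in_gap:
  assumes "in_gap x j"
  shows "nat_of_bits (drop scan_len (resps decoy_qf x y (scan_len + t))) = dyadic_index x j t"
proof (induction t)
  case 0
  have "\<lfloor>gap_coord x j\<rfloor> = 0"
    using gap_coord_unit[OF assms] by (simp add: floor_eq_iff)
  then show ?case
    by (simp add: dyadic_index_def nat_of_bits_def)
next
  case (Suc t)
  define R where "R = resps decoy_qf x y (scan_len + t)"
  have "scan_count R = 2 * j + 1"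
    unfolding R_def using assms by (rule scan_count_in_gap) simp
  then have "decoy_qf y R = bisect_point j (dyadic_index x j t) t"
    using Suc.IH by (simp add: decoy_qf_after_scan R_def)
  moreover have "(bisect_point j (dyadic_index x j t) t \<le> x)
      = (2 * real (dyadic_index x j t) + 1 \<le> 2 * (2 ^ t * gap_coord x j))"
    using bisect_point_le_iff[of j "dyadic_index x j t" t "gap_coord x j"] gap_coord_eq[of x j]
    by (simp add: mult.assoc)
  moreover have "dyadic_index x j (Suc t) = 2 * dyadic_index x j t
      + of_bool (2 * real (dyadic_index x j t) + 1 \<le> 2 * (2 ^ t * gap_coord x j))"
    using nat_floor_double[of "2 ^ t * gap_coord x j"] gap_coord_unit[OF assms]
    by (simp add: dyadic_index_def mult.assoc)
  moreover have "resps decoy_qf x y (scan_len + Suc t) = R @ [decoy_qf y R \<le> x]"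
    by (simp add: R_def Let_def)
  ultimately show ?case
    using Suc.IH by (simp add: R_def)
qed

lemma queries_in_gap:
  assumes "in_gap x j"
  shows "queries decoy_qf num_queries x y
    = map scan_point [0..<scan_len] @ map (\<lambda>t. bisect_point j (dyadic_index x j t) t) [0..<M]"
proof -
  have "decoy_qf y (resps decoy_qf x y (scan_len + t)) = bisect_point j (dyadic_index x j t) t" for t
    using scan_count_in_gap[OF assms, of "scan_len + t" y] resps_in_gap[OF assms, of y t]
    by (simp add: decoy_qf_after_scan)
  then show ?thesis
    by (simp add: queries_decoy_qf)
qed

lemma queries_in_slot:
  assumes "in_slot x i"
  shows "queries decoy_qf num_queries x y
    = map scan_point [0..<scan_len] @ map (\<lambda>t. bisect_point (seed_gap y) (seed_index y t) t) [0..<M]"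
proof -
  have "decoy_qf y (resps decoy_qf x y (scan_len + t)) = bisect_point (seed_gap y) (seed_index y t) t" for t
    using scan_count_in_slot[OF assms, of "scan_len + t" y] by (simp add: decoy_qf_after_scan)
  then show ?thesis
    by (simp add: queries_decoy_qf)
qed

lemma estimate_in_gap:
  "in_gap x j \<Longrightarrow> estimate decoy_qf decoy_est num_queries x y = bisect_point j (dyadic_index x j M) M"
  using scan_count_in_gap[of x j "scan_len + M" y] resps_in_gap[of x j y M]
  by (simp add: estimate_def decoy_est_def num_queries_def)

lemma estimate_in_slot:
  "in_slot x i \<Longrightarrow> estimate decoy_qf decoy_est num_queries x y = real i * spacing + \<epsilon> / 2"
  using scan_count_in_slot[of x i num_queries y] by (simp add: estimate_def decoy_est_def num_queries_def)

lemma bisect_point_in_gap: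
  assumes "p < 2 ^ t"
  shows "real j * spacing + \<epsilon> < bisect_point j p t" "bisect_point j p t < real (j + 1) * spacing"
proof -
  define f where "f = (2 * real p + 1) / 2 ^ (t + 1)"
  have "real (p + 1) \<le> real (2 ^ t)"
    using assms by (simp only: of_nat_le_iff Suc_eq_plus1[symmetric] Suc_le_eq)
  then have "real p + 1 \<le> 2 ^ t"
    by simp
  then have "0 < f" "f < 1"
    by (simp_all add: f_def)
  then have "0 < gap_width * f" "gap_width * f < gap_width"
    using gap_width_pos by simp_all
  moreover have "bisect_point j p t = real j * spacing + \<epsilon> + gap_width * f"
    by (simp add: bisect_point_def f_def)
  ultimately show "real j * spacing + \<epsilon> < bisect_point j p t"
    "bisect_point j p t < real (j + 1) * spacing"
    by (simp_all add: gap_width_def algebra_simps)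
qed

lemma bisect_point_unit:
  assumes "j < L - 1" "p < 2 ^ t"
  shows "bisect_point j p t \<in> {0..<1}"
proof -
  have "real (j + 1) * spacing \<le> real (L - 1) * spacing"
    using assms(1) eps_less_spacing eps_pos by (intro mult_right_mono) auto
  then have "real (j + 1) * spacing \<le> 1 - \<epsilon>"
    by (simp only: spacing_last)
  moreover have "0 \<le> real j * spacing + \<epsilon>"
    using eps_less_spacing eps_pos by simp
  ultimately show ?thesis
    using bisect_point_in_gap[OF assms(2), of j] eps_pos by simp
qed

lemma bisect_point_level_inj:
  assumes "bisect_point j p t = bisect_point j p' t'"
  shows "t = t'"
proof (rule odd_dyadic_eq_imp_level_eq)
  from assms have
    "gap_width * ((2 * real p + 1) / 2 ^ (t + 1)) = gap_width * ((2 * real p' + 1) / 2 ^ (t' + 1))"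
    by (simp add: bisect_point_def)
  then show "(2 * real p + 1) / 2 ^ (t + 1) = (2 * real p' + 1) / 2 ^ (t' + 1)"
    using gap_width_pos by (simp only: mult_cancel_left) simp
qed

lemma bisect_point_approx:
  assumes "in_gap x j"
  shows "\<bar>bisect_point j (dyadic_index x j M) M - x\<bar> \<le> \<epsilon> / 2"
proof -
  define \<theta> where "\<theta> = gap_coord x j"
  define v where "v = 2 ^ M * \<theta>"
  define P where "P = dyadic_index x j M"
  have x: "x = real j * spacing + \<epsilon> + gap_width * \<theta>"
    unfolding \<theta>_def by (rule gap_coord_eq)
  have "real P = of_int \<lfloor>v\<rfloor>"
    using gap_coord_unit[OF assms] by (simp add: P_def dyadic_index_def v_def \<theta>_def)
  then have "\<bar>2 * real P + 1 - 2 * v\<bar> \<le> 1"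
    by linarith
  have "bisect_point j P M - x = gap_width * ((2 * real P + 1 - 2 * v) / 2 ^ (M + 1))"
    by (simp add: x bisect_point_def v_def field_simps)
  then have "\<bar>bisect_point j P M - x\<bar> = gap_width * (\<bar>2 * real P + 1 - 2 * v\<bar> / 2 ^ (M + 1))"
    using gap_width_pos by (simp add: abs_mult abs_divide)
  also have "\<dots> \<le> gap_width * (1 / 2 ^ (M + 1))"
    using \<open>\<bar>2 * real P + 1 - 2 * v\<bar> \<le> 1\<close> gap_width_pos
    by (intro mult_left_mono divide_right_mono) simp_all
  also have "\<dots> \<le> \<epsilon> / 2"
  proof -
    have "gap_width \<le> 2 ^ M * \<epsilon>"
      using gap_resolution by (simp add: gap_width_def spacing_def)
    then show ?thesis
      by (simp add: divide_le_eq mult.commute)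
  qed
  finally show ?thesis
    by (simp add: P_def)
qed

lemma dyadic_index_less: "in_gap x j \<Longrightarrow> dyadic_index x j t < 2 ^ t"
  using gap_coord_unit[of x j] by (auto simp: dyadic_index_def nat_less_iff floor_less_iff)

lemma dyadic_index_div:
  assumes "in_gap x j" "t \<le> M"
  shows "dyadic_index x j M div 2 ^ (M - t) = dyadic_index x j t"
proof -
  have "(2::real) ^ M = 2 ^ t * 2 ^ (M - t)"
    using assms(2) by (simp add: power_add[symmetric])
  then have "\<lfloor>2 ^ M * gap_coord x j\<rfloor> div 2 ^ (M - t) = \<lfloor>2 ^ t * gap_coord x j\<rfloor>"
    using floor_divide_real_eq_div[of "2 ^ (M - t)" "2 ^ M * gap_coord x j"] by simp
  moreover have "dyadic_index x j M div 2 ^ (M - t) = nat (\<lfloor>2 ^ M * gap_coord x j\<rfloor> div 2 ^ (M - t))"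
    using gap_coord_unit[OF assms(1)] by (simp add: dyadic_index_def nat_power_eq nat_div_distrib)
  ultimately show ?thesis
    by (simp add: dyadic_index_def)
qed

lemma distinct_scan_bisect:
  assumes "j < L - 1" and p: "\<forall>t<M. p t < 2 ^ t"
  shows "distinct (map scan_point [0..<scan_len] @ map (\<lambda>t. bisect_point j (p t) t) [0..<M])"
proof -
  have "inj_on scan_point {0..<scan_len}"
    using scan_point_strict_mono by (intro strict_mono_on_imp_inj_on strict_mono_onI)
  moreover have "inj_on (\<lambda>t. bisect_point j (p t) t) {0..<M}"
    by (rule inj_onI) (rule bisect_point_level_inj)
  moreover have "scan_point m \<noteq> bisect_point j (p t) t" if "t < M" for m t
    using bisect_point_in_gap[of "p t" t j] p that scan_point_mono[of m "2 * j"]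
      scan_point_mono[of "2 * j + 1" m]
    by (cases "m \<le> 2 * j") auto
  ultimately show ?thesis
    by (auto simp: distinct_map)
qed

lemma seed_gap_less: "y \<in> {1..num_seeds} \<Longrightarrow> seed_gap y < L - 1"
  by (auto simp: num_seeds_def seed_gap_def less_mult_imp_div_less)

lemma seed_index_less:
  assumes "t \<le> M"
  shows "seed_index y t < 2 ^ t"
proof -
  have "(y - 1) mod 2 ^ M < (2::nat) ^ t * 2 ^ (M - t)"
    using assms
    by (simp add: power_add[symmetric])
  then show ?thesis
    unfolding seed_index_def by (rule less_mult_imp_div_less)
qed

lemma seed_for_gap_point:
  assumes "j < L - 1" "p < 2 ^ M"
  defines "y \<equiv> j * 2 ^ M + p + 1"
  shows "y \<in> {1..num_seeds}" "seed_gap y = j" "seed_index y t = p div 2 ^ (M - t)"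
proof -
  have "j * 2 ^ M + p + 1 \<le> (L - 2) * 2 ^ M + 2 ^ M"
    using assms(1,2) mult_le_mono1[of j "L - 2" "2 ^ M"] by linarith
  also have "\<dots> = (L - 2 + 1) * 2 ^ M"
    by simp
  also have "L - 2 + 1 = L - 1"
    using assms(1) by simp
  finally show "y \<in> {1..num_seeds}"
    by (simp add: y_def num_seeds_def)
  show "seed_gap y = j" "seed_index y t = p div 2 ^ (M - t)"
    using assms(2) by (simp_all add: y_def seed_gap_def seed_index_def)
qed

lemma scan_count_le: "scan_count rs \<le> scan_len"
  unfolding scan_count_def by (metis length_filter_le length_take min.bounded_iff)

lemma odd_scan_count_gap:
  assumes "odd (scan_count rs)"
  shows "scan_count rs div 2 < L - 1"
proof -
  have "scan_count rs < 2 * (L - 1)"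
    using assms scan_count_le[of rs] scan_len_eq by (metis dvd_triv_left le_neq_implies_less)
  then show ?thesis
    by presburger
qed

lemma decoy_qf_unit:
  assumes "y \<in> {1..num_seeds}" "length rs < num_queries"
  shows "decoy_qf y rs \<in> {0..<1}"
proof (cases "length rs < scan_len")
  case True
  then show ?thesis
    using scan_point_unit by (simp add: decoy_qf_def)
next
  case False
  define t where "t = length rs - scan_len"
  have "t < M"
    using assms(2) False by (simp add: t_def num_queries_def)
  have "nat_of_bits (drop scan_len rs) < 2 ^ t"
    using nat_of_bits_less[of "drop scan_len rs"] by (simp add: t_def)
  then show ?thesis
    using False odd_scan_count_gap[of rs] bisect_point_unit seed_gap_less[OF assms(1)]
      seed_index_less[of t y] \<open>t < M\<close>
    by (simp add: decoy_qf_after_scan t_def)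
qed

lemma decoy_est_unit:
  assumes "length rs = num_queries"
  shows "decoy_est y rs \<in> {0..<1}"
proof (cases "odd (scan_count rs)")
  case True
  have "nat_of_bits (drop scan_len rs) < 2 ^ M"
    using nat_of_bits_less[of "drop scan_len rs"] assms by (simp add: num_queries_def)
  then show ?thesis
    using True odd_scan_count_gap[of rs] bisect_point_unit by (simp add: decoy_est_def)
next
  case False
  have "real (scan_count rs div 2) * spacing \<le> real (L - 1) * spacing"
    using scan_count_le[of rs] eps_less_spacing eps_pos
    by (intro mult_right_mono) (simp_all add: scan_len_eq)
  then have "real (scan_count rs div 2) * spacing \<le> 1 - \<epsilon>"
    by (simp only: spacing_last)
  then show ?thesis
    using False eps_pos eps_less_spacing by (simp add: decoy_est_def)
qed

lemma decoy_queries_distinct: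
  assumes "x \<in> {0..<1}" "y \<in> {1..num_seeds}"
  shows "distinct (queries decoy_qf num_queries x y)"
  using in_gap_or_in_slot[OF assms(1)]
proof
  assume "\<exists>j. in_gap x j"
  then obtain j where "in_gap x j"
    by blast
  then show ?thesis
    using distinct_scan_bisect[of j "dyadic_index x j"] dyadic_index_less
    by (simp add: queries_in_gap in_gap_def)
next
  assume "\<exists>i. in_slot x i"
  then show ?thesis
    using distinct_scan_bisect[OF seed_gap_less[OF assms(2)], of "seed_index y"] seed_index_less
    by (auto simp: queries_in_slot)
qed

lemma decoy_is_strategy: "is_strategy num_queries num_seeds decoy_qf decoy_est"
  using two_le_L decoy_qf_unit decoy_est_unit decoy_queries_distinct
  by (auto simp: is_strategy_def num_seeds_def)

lemma decoy_accurate: "accurate \<epsilon> num_queries num_seeds decoy_qf decoy_est"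
  unfolding accurate_def
proof (intro ballI)
  fix x :: real and y :: nat
  assume "x \<in> {0..<1}" "y \<in> {1..num_seeds}"
  then consider j where "in_gap x j" | i where "in_slot x i"
    using in_gap_or_in_slot by blast
  then show "\<bar>estimate decoy_qf decoy_est num_queries x y - x\<bar> \<le> \<epsilon> / 2"
  proof cases
    case (1 j)
    then show ?thesis
      using bisect_point_approx by (simp add: estimate_in_gap)
  next
    case (2 i)
    then have "real i * spacing \<le> x" "x < real i * spacing + \<epsilon>"
      by (simp_all add: in_slot_def)
    then show ?thesis
      unfolding estimate_in_slot[OF 2] abs_le_iff by (intro conjI) linarith+
  qed
qed

lemma decoy_point_in_slot: "i < L \<Longrightarrow> in_slot (real i * spacing) i"
  using eps_pos by (simp add: in_slot_def)

lemma decoy_point_unit: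
  assumes "i < L"
  shows "real i * spacing \<in> {0..<1}"
proof -
  from assms have "real i * spacing \<le> real (L - 1) * spacing"
    using eps_less_spacing eps_pos by (intro mult_right_mono) auto
  then have "real i * spacing \<le> 1 - \<epsilon>"
    by (simp only: spacing_last)
  then show ?thesis
    using eps_less_spacing eps_pos by simp
qed

lemma decoy_points_separated: "separated (1 / real L) L (\<lambda>i. real i * spacing)"
  unfolding separated_def
proof (intro allI impI)
  fix i j :: nat assume "i < j" "j < L"
  then have "real j * spacing - real i * spacing = real (j - i) * spacing" "1 \<le> real (j - i)"
    by (simp_all add: of_nat_diff left_diff_distrib)
  then have "spacing \<le> real j * spacing - real i * spacing"
    using mult_right_mono[of 1 "real (j - i)" spacing] eps_less_spacing eps_pos by simp
  then show "1 / real L < real j * spacing - real i * spacing"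
    using inverse_L_less_spacing by linarith
qed

lemma decoy_queries_cover:
  assumes "x \<in> {0..<1}" "y \<in> {1..num_seeds}"
  obtains y' where "y' \<in> {1..num_seeds}" "\<And>i. i < L \<Longrightarrow>
      queries decoy_qf num_queries (real i * spacing) y' = queries decoy_qf num_queries x y"
  using in_gap_or_in_slot[OF assms(1)]
proof
  assume "\<exists>j. in_gap x j"
  then obtain j where j: "in_gap x j"
    by blast
  define y' where "y' = j * 2 ^ M + dyadic_index x j M + 1"
  have seed: "y' \<in> {1..num_seeds}" "seed_gap y' = j"
    "\<And>t. seed_index y' t = dyadic_index x j M div 2 ^ (M - t)"
    using seed_for_gap_point[of j "dyadic_index x j M"] j dyadic_index_less
    by (simp_all add: y'_def in_gap_def)
  show thesis
  proof (rule that[OF seed(1)])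
    fix i assume "i < L"
    then show "queries decoy_qf num_queries (real i * spacing) y' = queries decoy_qf num_queries x y"
      using j seed(2,3) dyadic_index_div[OF j] queries_in_slot[OF decoy_point_in_slot]
      by (simp add: queries_in_gap)
  qed
next
  assume "\<exists>i. in_slot x i"
  then obtain i' where "in_slot x i'"
    by blast
  show thesis
  proof (rule that[OF assms(2)])
    fix i assume "i < L"
    then show "queries decoy_qf num_queries (real i * spacing) y = queries decoy_qf num_queries x y"
      using queries_in_slot[OF decoy_point_in_slot] queries_in_slot[OF \<open>in_slot x i'\<close>] by simp
  qed
qed

lemma decoy_cover_number:
  assumes "x \<in> {0..<1}" "q \<in> Qset num_queries num_seeds decoy_qf x"
  shows "L \<le> cover_number (1 / real L) (info_set num_queries num_seeds decoy_qf q)"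
proof -
  obtain y where y: "y \<in> {1..num_seeds}" "q = queries decoy_qf num_queries x y"
    using assms(2) by (auto simp: Qset_def)
  then obtain y' where y': "y' \<in> {1..num_seeds}"
    "\<And>i. i < L \<Longrightarrow> queries decoy_qf num_queries (real i * spacing) y' = q"
    using decoy_queries_cover assms(1) by metis
  have "real i * spacing \<in> info_set num_queries num_seeds decoy_qf q" if "i < L" for i
  proof -
    have "q \<in> Qset num_queries num_seeds decoy_qf (real i * spacing)"
      unfolding Qset_def using y'(1) y'(2)[OF that, symmetric] by blast
    then show ?thesis
      using decoy_point_unit[OF that] by (simp add: info_set_def)
  qed
  moreover have "covers (1 / real L) (info_set num_queries num_seeds decoy_qf q) L"
    using two_le_L by (intro covers_unit_interval) (auto simp: info_set_def)
  ultimately show ?thesis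
    using decoy_points_separated by (intro cover_number_ge_if_separated) auto
qed

lemma decoy_is_private: "is_private \<epsilon> (1 / real L) L num_queries num_seeds decoy_qf decoy_est"
  using decoy_accurate decoy_cover_number by (simp add: is_private_def accurate_def)

end

lemma Nstar_le:
  assumes "is_strategy N Yc qf est" "is_private \<epsilon> \<delta> L N Yc qf est"
  shows "Nstar \<epsilon> \<delta> L \<le> N"
  unfolding Nstar_def using assms by (intro Least_le) blast

lemma Nstar_attained:
  assumes "is_strategy N Yc qf est" "is_private \<epsilon> \<delta> L N Yc qf est"
  obtains Yc' qf' est' where "is_strategy (Nstar \<epsilon> \<delta> L) Yc' qf' est'"
    "is_private \<epsilon> \<delta> L (Nstar \<epsilon> \<delta> L) Yc' qf' est'"
  using assms LeastI_ex[of "\<lambda>N. \<exists>Yc qf est. is_strategy N Yc qf est \<and> is_private \<epsilon> \<delta> L N Yc qf est"]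
  unfolding Nstar_def by blast

lemma le_two_pow_nat_ceiling_log:
  assumes "0 < z"
  shows "z \<le> 2 ^ nat \<lceil>log 2 z\<rceil>"
proof -
  from assms have "z = 2 powr log 2 z"
    by simp
  also have "\<dots> \<le> 2 powr real (nat \<lceil>log 2 z\<rceil>)"
    by (intro powr_mono) linarith+
  also have "\<dots> = 2 ^ nat \<lceil>log 2 z\<rceil>"
    by (simp add: powr_realpow)
  finally show ?thesis .
qed

context
  fixes \<epsilon> :: real and L :: nat
  assumes eps_pos: "0 < \<epsilon>" and two_le_L: "2 \<le> L" and small: "2 * \<epsilon> < 1 / real L"
begin

lemma Nstar_upper:
  assumes "(1 - \<epsilon>) / real (L - 1) - \<epsilon> \<le> 2 ^ M * \<epsilon>"
  shows "Nstar \<epsilon> (1 / real L) L \<le> 2 * L - 2 + M"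
proof -
  have "real L * \<epsilon> < 1"
    using small two_le_L by (simp add: field_simps)
  then interpret decoy_strategy \<epsilon> L M
    using eps_pos two_le_L assms by unfold_locales
  show ?thesis
    using Nstar_le[OF decoy_is_strategy decoy_is_private] by (simp add: num_queries_def scan_len_def)
qed

lemma Nstar_private_strategy:
  obtains Yc qf est where "is_strategy (Nstar \<epsilon> (1 / real L) L) Yc qf est"
    "is_private \<epsilon> (1 / real L) L (Nstar \<epsilon> (1 / real L) L) Yc qf est"
proof -
  define M where "M = nat \<lceil>log 2 (1 / \<epsilon>)\<rceil>"
  have "(1 - \<epsilon>) / real (L - 1) \<le> 1"
    using two_le_L eps_pos by (simp add: divide_le_eq of_nat_diff)
  then have "(1 - \<epsilon>) / real (L - 1) - \<epsilon> \<le> 1"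
    using eps_pos by simp
  also have "1 \<le> 2 ^ M * \<epsilon>"
    using le_two_pow_nat_ceiling_log[of "1 / \<epsilon>"] eps_pos by (simp add: M_def field_simps)
  finally have "real L * \<epsilon> < 1" "(1 - \<epsilon>) / real (L - 1) - \<epsilon> \<le> 2 ^ M * \<epsilon>"
    using small two_le_L by (simp_all add: field_simps)
  then interpret decoy_strategy \<epsilon> L M
    using eps_pos two_le_L by unfold_locales
  show ?thesis
    using Nstar_attained[OF decoy_is_strategy decoy_is_private] that by blast
qed

lemma Nstar_lower_log: "log 2 (1 / (real L * \<epsilon>)) + 2 * real L - 4 < real (Nstar \<epsilon> (1 / real L) L)"
proof -
  obtain Yc qf est where "is_strategy (Nstar \<epsilon> (1 / real L) L) Yc qf est"
    "is_private \<epsilon> (1 / real L) L (Nstar \<epsilon> (1 / real L) L) Yc qf est"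
    by (rule Nstar_private_strategy)
  from private_strategy_length_lower[OF this eps_pos small] two_le_L show ?thesis
    by (simp add: divide_divide_eq_left)
qed

lemma Nstar_lower_pow: "1 \<le> 2 ^ Nstar \<epsilon> (1 / real L) L * \<epsilon>"
proof -
  obtain Yc qf est where "is_strategy (Nstar \<epsilon> (1 / real L) L) Yc qf est"
    "is_private \<epsilon> (1 / real L) L (Nstar \<epsilon> (1 / real L) L) Yc qf est"
    by (rule Nstar_private_strategy)
  then show ?thesis
    by (intro accurate_strategy_length_lower) (auto simp: is_strategy_def dest: accurate_if_private)
qed

lemma Nstar_bounds_L_eq_2:
  assumes "L = 2"
  shows "of_int \<lceil>log 2 (1 / \<epsilon>)\<rceil> \<le> real (Nstar \<epsilon> (1 / real L) L)"
    "real (Nstar \<epsilon> (1 / real L) L) \<le> of_int \<lceil>log 2 (1 / \<epsilon>)\<rceil> + 4"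
proof -
  have "1 / \<epsilon> \<le> 2 powr real (Nstar \<epsilon> (1 / real L) L)"
    using Nstar_lower_pow eps_pos by (simp add: powr_realpow field_simps)
  then have "log 2 (1 / \<epsilon>) \<le> real (Nstar \<epsilon> (1 / real L) L)"
    using eps_pos by (simp add: log_le_iff)
  then have "\<lceil>log 2 (1 / \<epsilon>)\<rceil> \<le> int (Nstar \<epsilon> (1 / real L) L)"
    by (simp add: ceiling_le_iff)
  then show "of_int \<lceil>log 2 (1 / \<epsilon>)\<rceil> \<le> real (Nstar \<epsilon> (1 / real L) L)"
    by (metis of_int_le_iff of_int_of_nat_eq)
  define M where "M = nat \<lceil>log 2 (1 / \<epsilon>)\<rceil>"
  have "1 < 1 / \<epsilon>"
    using small assms eps_pos by (simp add: field_simps)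
  then have "real M = of_int \<lceil>log 2 (1 / \<epsilon>)\<rceil>"
    using eps_pos by (simp add: M_def)
  have "1 \<le> 2 ^ M * \<epsilon>"
    using le_two_pow_nat_ceiling_log[of "1 / \<epsilon>"] eps_pos by (simp add: M_def field_simps)
  then have "Nstar \<epsilon> (1 / real L) L \<le> 2 * L - 2 + M"
    using assms eps_pos by (intro Nstar_upper) simp
  then show "real (Nstar \<epsilon> (1 / real L) L) \<le> of_int \<lceil>log 2 (1 / \<epsilon>)\<rceil> + 4"
    using assms \<open>real M = of_int \<lceil>log 2 (1 / \<epsilon>)\<rceil>\<close> by linarith
qed

lemma Nstar_bounds:
  "of_int \<lceil>log 2 (1 / (real L * \<epsilon>))\<rceil> + 2 * real L - 4 \<le> real (Nstar \<epsilon> (1 / real L) L)"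
  "real (Nstar \<epsilon> (1 / real L) L) \<le> of_int \<lceil>log 2 (1 / (real L * \<epsilon>))\<rceil> + 2 * real L"
proof -
  let ?N = "Nstar \<epsilon> (1 / real L) L"
  have "log 2 (1 / (real L * \<epsilon>)) \<le> real_of_int (int ?N + 4 - 2 * int L)"
    using Nstar_lower_log by simp
  then show "of_int \<lceil>log 2 (1 / (real L * \<epsilon>))\<rceil> + 2 * real L - 4 \<le> real ?N"
    unfolding ceiling_le_iff[symmetric] by linarith
  define m where "m = nat \<lceil>log 2 (1 / (real L * \<epsilon>))\<rceil>"
  have Leps: "0 < real L * \<epsilon>" "real L * \<epsilon> < 1"
    using small eps_pos two_le_L by (simp_all add: field_simps)
  then have "real m = of_int \<lceil>log 2 (1 / (real L * \<epsilon>))\<rceil>"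
    by (simp add: m_def)
  have "real (L - 1) = real L - 1"
    using two_le_L by (simp add: of_nat_diff)
  moreover have "(1 - \<epsilon>) / (real L - 1) \<le> 1 / (real L - 1)"
    using two_le_L eps_pos by (intro divide_right_mono) auto
  ultimately have "(1 - \<epsilon>) / real (L - 1) - \<epsilon> \<le> 1 / (real L - 1)"
    using eps_pos by simp
  also have "\<dots> \<le> 2 * (1 / (real L * \<epsilon>)) * \<epsilon>"
    using two_le_L eps_pos by (simp add: field_simps)
  also have "\<dots> \<le> 2 ^ (m + 1) * \<epsilon>"
  proof (rule mult_right_mono)
    show "2 * (1 / (real L * \<epsilon>)) \<le> 2 ^ (m + 1)"
      using le_two_pow_nat_ceiling_log[of "1 / (real L * \<epsilon>)"] Leps by (simp add: m_def)
  qed (use eps_pos in simp)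
  finally have "?N \<le> 2 * L - 2 + (m + 1)"
    by (rule Nstar_upper)
  then show "real ?N \<le> of_int \<lceil>log 2 (1 / (real L * \<epsilon>))\<rceil> + 2 * real L"
    using two_le_L \<open>real m = _\<close> by linarith
qed

end

theorem corollary1:
  fixes \<epsilon> :: real and L :: nat
  assumes "\<epsilon> > 0" and "L \<ge> 2" and "2 * \<epsilon> < 1 / real L"
  shows "(L = 2 \<longrightarrow>
            of_int \<lceil>log 2 (1 / \<epsilon>)\<rceil> \<le> real (Nstar \<epsilon> (1 / real L) L) \<and>
            real (Nstar \<epsilon> (1 / real L) L) \<le> of_int \<lceil>log 2 (1 / \<epsilon>)\<rceil> + 4) \<and>
         (L \<ge> 3 \<longrightarrow>
            of_int \<lceil>log 2 (1 / (real L * \<epsilon>))\<rceil> + 2 * real L - 4 \<le> real (Nstar \<epsilon> (1 / real L) L) \<and>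
            real (Nstar \<epsilon> (1 / real L) L) \<le> of_int \<lceil>log 2 (1 / (real L * \<epsilon>))\<rceil> + 2 * real L)"
  using Nstar_bounds_L_eq_2[OF assms] Nstar_bounds[OF assms] by blast

end
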